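(* Let $A$ be the generator of a $C$-regularized semigroup $\{W(t)\}_{t\ge0}$ on a separable Banach space $X$. Suppose there are a set $Y_0\subset Z(A)$, dense in $X$, and a mapping $S:Y_0\to Y_0$ such that: (1) $e^ASy=y$ for all $y\in Y_0$; (2) $\sum_{n=1}^\infty S^ny$ converges unconditionally for all $y\in Y_0$; (3) $\sum_{n=1}^\infty e^{nA}y$ converges unconditionally for all $y\in Y_0$. If in addition $\operatorname{Im}(C)$ is dense in $X$, then the operator $e^A$ and the semigroup $\{e^{tA}\}_{t\ge0}$ are frequently hypercyclic.
   Context: For a bounded injective operator $C$ on $X$, a strongly continuous family $\{W(t)\}_{t\ge0}\subset B(X)$ is a $C$-regularized semigroup if $W(0)=C$ and $W(t)W(s)=CW(t+s)$ for all $s,t\ge0$. Its generator is $Ax=C^{-1}[\lim_{t\to0}\frac1t(W(t)x-Cx)]$ with domain the set of $x$ for which the limit exists and lies in $\operatorname{Im}(C)$. Define $e^{tA}:=C^{-1}W(t)$ with domain $\{x: W(t)x\in\operatorname{Im}(C)\}$. The solution space is $Z(A)=\{x\in X: W(t)x\in\operatorname{Im}(C)\ \forall t\ge0,\ t\mapsto C^{-1}W(t)x \text{ continuous}\}$. A series $\sum_k x_k$ converges unconditionally if for every $\varepsilon>0$ there is $N$ with $\|\sum_{k\in F}x_k\|<\varepsilon$ for every finite $F\subset\mathbb{N}$ disjoint from $\{1,\dots,N\}$. An operator $T$ is frequently hypercyclic if there is $f\in D(T)$ with $T^nf\in D(T)$ for all $n\ge1$ such that for every non-empty open $U$, $\{n\in\mathbb{N}:T^nf\in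 U\}$ has positive lower density $\liminf_N\#(\cdot\cap\{1,\dots,N\})/N$. The semigroup $\{e^{tA}\}_{t\ge0}$ is frequently hypercyclic if there is $x\in Z(A)$ such that for every non-empty open $U\subset X$, $\liminf_{N\to\infty}\mu(\{t\ge0:e^{tA}x\in U\}\cap[0,N])/N>0$, $\mu$ Lebesgue measure. *)

theory Defs
  imports "HOL-Analysis.Analysis"
begin

text \<open>C-regularized semigroup W (indexed by real t, only t \<ge> 0 matters) with
  bounded injective regularizing operator C.\<close>
definition C_reg_semigroup :: "('a::banach \<Rightarrow> 'a) \<Rightarrow> (real \<Rightarrow> 'a \<Rightarrow> 'a) \<Rightarrow> bool" where
  "C_reg_semigroup C W \<longleftrightarrow>
     bounded_linear C \<and> inj C \<and>
     (\<forall>t\<ge>0. bounded_linear (W t)) \<and>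
     (\<forall>x. continuous_on {0..} (\<lambda>t. W t x)) \<and>
     W 0 = C \<and>
     (\<forall>s\<ge>0. \<forall>t\<ge>0. \<forall>x. W t (W s x) = C (W (t + s) x))"

text \<open>Generator A as a (graph) relation: x \<in> D(A) and A x = y.\<close>
definition generator :: "('a::banach \<Rightarrow> 'a) \<Rightarrow> (real \<Rightarrow> 'a \<Rightarrow> 'a) \<Rightarrow> 'a \<Rightarrow> 'a \<Rightarrow> bool" where
  "generator C W x y \<longleftrightarrow> ((\<lambda>t. (1 / t) *\<^sub>R (W t x - C x)) \<longlongrightarrow> C y) (at_right 0)"

text \<open>e^{tA} := C^{-1} W(t), with domain {x. W t x \<in> Im C}.\<close>
definition expA :: "('a \<Rightarrow> 'a) \<Rightarrow> (real \<Rightarrow> 'a \<Rightarrow> 'a) \<Rightarrow> real \<Rightarrow> 'a \<Rightarrow> 'a" where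
  "expA C W t x = inv_into UNIV C (W t x)"

definition expA_dom :: "('a \<Rightarrow> 'a) \<Rightarrow> (real \<Rightarrow> 'a \<Rightarrow> 'a) \<Rightarrow> real \<Rightarrow> 'a set" where
  "expA_dom C W t = {x. W t x \<in> range C}"

definition solution_space :: "('a::topological_space \<Rightarrow> 'a) \<Rightarrow> (real \<Rightarrow> 'a \<Rightarrow> 'a) \<Rightarrow> 'a set" where
  "solution_space C W = {x. (\<forall>t\<ge>0. W t x \<in> range C) \<and> continuous_on {0..} (\<lambda>t. expA C W t x)}"

definition uncond_conv :: "(nat \<Rightarrow> 'a::real_normed_vector) \<Rightarrow> bool" where
  "uncond_conv x \<longleftrightarrow> (\<forall>\<epsilon>>0. \<exists>N. \<forall>F. finite F \<and> F \<subseteq> {1..} \<and> F \<inter> {1..N} = {}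
       \<longrightarrow> norm (sum x F) < \<epsilon>)"

definition lower_density :: "nat set \<Rightarrow> ereal" where
  "lower_density B = liminf (\<lambda>N. ereal (real (card (B \<inter> {1..N})) / real N))"

definition freq_hypercyclic_op :: "'a set \<Rightarrow> ('a::topological_space \<Rightarrow> 'a) \<Rightarrow> bool" where
  "freq_hypercyclic_op D T \<longleftrightarrow>
     (\<exists>f\<in>D. (\<forall>n\<ge>1. (T ^^ n) f \<in> D) \<and>
        (\<forall>U. open U \<and> U \<noteq> {} \<longrightarrow> lower_density {n. (T ^^ n) f \<in> U} > 0))"

definition freq_hypercyclic_sg :: "('a::topological_space \<Rightarrow> 'a) \<Rightarrow> (real \<Rightarrow> 'a \<Rightarrow> 'a) \<Rightarrow> bool" where
  "freq_hypercyclic_sg C W \<longleftrightarrow>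
     (\<exists>x\<in>solution_space C W. \<forall>U. open U \<and> U \<noteq> {} \<longrightarrow>
        Liminf at_top (\<lambda>N::real. ereal (measure lborel ({t. t \<ge> 0 \<and> expA C W t x \<in> U} \<inter> {0..N}) / N)) > 0)"

end

(*
  The operator e^A: pick a sequence y l in Y0 that visits every nonempty open set infinitely
  often, and thresholds M l beyond which all finite tails of the series of S^n (y i) and of
  e^(nA) (y i), i <= l, have norm below 4^-l. Cut the naturals into blocks whose levels each
  occur with positive lower density and which are separated by gaps longer than the
  thresholds, and let x be the sum over all blocks j of S^(p j) (y (lev j)), p j the start of
  block j. Because e^A S = id, e^(p j A) x is y (lev j) plus tails of the two series, hence
  within 4 * 2^-(lev j) of y (lev j); so every open set is visited along a set of positive
  lower density.

  The semigroup: e^((n + s) A) (C x) = W s (e^(nA) x), and W s, 0 <= s <= 1, are uniformly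
  bounded by the Banach-Steinhaus theorem. If e^(nA) x is close to some v with C v in U
  (Im C is dense), then W s (e^(nA) x) stays in U for all s in an interval [0, delta], which
  turns the positive lower density of these n into positive lower density of times in U.
*)
theory Submission
  imports Defs
begin

section \<open>Blocks whose levels have positive lower density\<close>

lemma card_multiples_atLeastAtMost:
  fixes d J :: nat assumes "d > 0"
  shows "card {i \<in> {1..J}. d dvd i} = J div d"
proof -
  have "{i \<in> {1..J}. d dvd i} = (\<lambda>t. d * t) ` {1..J div d}"
  proof (intro set_eqI iffI)
    fix i assume "i \<in> {i \<in> {1..J}. d dvd i}"
    then obtain t where t: "i = d * t" "1 \<le> i" "i \<le> J" by (auto elim: dvdE)
    have "1 \<le> t" using t by (cases t) auto
    moreover have "t \<le> J div d"
      using div_le_mono[OF \<open>i \<le> J\<close>, of d] assms t(1) by simp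
    ultimately show "i \<in> (\<lambda>t. d * t) ` {1..J div d}" using t by auto
  next
    fix i assume "i \<in> (\<lambda>t. d * t) ` {1..J div d}"
    then obtain t where "t \<in> {1..J div d}" "i = d * t" by blast
    hence t: "i = d * t" "1 \<le> t" "t \<le> J div d" by auto
    have "d * t \<le> d * (J div d)" using t by simp
    also have "\<dots> \<le> J" by simp
    finally show "i \<in> {i \<in> {1..J}. d dvd i}" using t assms by simp
  qed
  moreover have "inj_on (\<lambda>t. d * t) {1..J div d}" using assms by (auto simp: inj_on_def)
  ultimately show ?thesis by (simp add: card_image)
qed

lemma real_div_minus_one_le_div:
  fixes n d :: nat assumes "d > 0"
  shows "real n / real d - 1 \<le> real (n div d)"
proof -
  have "real n = real d * real (n div d) + real (n mod d)"
    by (metis mult_div_mod_eq of_nat_add of_nat_mult)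
  moreover have "real (n mod d) < real d" using assms by simp
  ultimately have "real n < real d * (real (n div d) + 1)" by (simp add: algebra_simps)
  thus ?thesis using assms by (simp add: field_simps)
qed

fun level_period :: "(nat \<Rightarrow> nat) \<Rightarrow> nat \<Rightarrow> nat" where
  "level_period G 0 = 1"
| "level_period G (Suc l) = level_period G l * (2 * G (Suc l))"

declare level_period.simps(2) [simp del]

text \<open>
  Write \<open>D l = level_period G l\<close>. The level of \<open>i \<ge> 1\<close> is the largest \<open>l\<close> with
  \<open>D l dvd i\<close>, so level \<open>l\<close> has density \<open>1 / D l - 1 / D (l + 1) \<ge> 1 / (2 D l)\<close>.
  Block \<open>j\<close> has length \<open>G (level (j + 1))\<close> and starts at \<open>L (j + 1) + L j\<close>, \<open>L\<close> the
  cumulated length, so any two blocks are separated by a gap at least as long as both.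
  As \<open>G l / D l \<le> 2 ^ - l\<close>, \<open>L\<close> grows linearly, and the blocks of each level start on a set
  of positive lower density.
\<close>
locale level_blocks =
  fixes G :: "nat \<Rightarrow> nat"
  assumes G_pos: "\<And>l. G l \<ge> 1"
begin

abbreviation D where "D \<equiv> level_period G"

lemma level_period_ge_power: "D l \<ge> 2 ^ l"
proof (induction l)
  case (Suc l)
  have "2 ^ Suc l = 2 ^ l * (2::nat)" by simp
  also have "\<dots> \<le> D l * (2 * G (Suc l))"
    using Suc G_pos[of "Suc l"] by (intro mult_mono) auto
  finally show ?case by (simp add: level_period.simps)
qed simp

lemma level_period_pos: "D l > 0"
  using level_period_ge_power[of l] by (metis less_le_trans zero_less_numeral zero_less_power)

lemma power_mult_G_le_level_period: "l \<ge> 1 \<Longrightarrow> 2 ^ l * G l \<le> D l"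
proof (cases l)
  case (Suc k)
  have "2 ^ Suc k * G (Suc k) = 2 ^ k * (2 * G (Suc k))" by simp
  also have "\<dots> \<le> D k * (2 * G (Suc k))" using level_period_ge_power[of k] by simp
  finally show ?thesis using Suc by (simp add: level_period.simps)
qed simp

lemma level_period_dvd: "l \<le> l' \<Longrightarrow> D l dvd D l'"
  by (induction l' rule: dec_induct) (auto simp: level_period.simps dvd_mult2)

definition level :: "nat \<Rightarrow> nat" where
  "level i = (LEAST l. \<not> D (Suc l) dvd i)"

lemma not_level_period_Suc_dvd_self: "i \<ge> 1 \<Longrightarrow> \<not> D (Suc i) dvd i"
proof
  assume "i \<ge> 1" "D (Suc i) dvd i"
  hence "D (Suc i) \<le> i" by (intro dvd_imp_le) auto
  moreover have "i < 2 ^ Suc i" by (induction i) auto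
  ultimately show False using level_period_ge_power[of "Suc i"] by linarith
qed

lemma level_period_dvd_level:
  assumes "i \<ge> 1"
  shows "D (level i) dvd i" "\<not> D (Suc (level i)) dvd i"
proof -
  show "\<not> D (Suc (level i)) dvd i"
    unfolding level_def
    using LeastI[of "\<lambda>l. \<not> D (Suc l) dvd i", OF not_level_period_Suc_dvd_self[OF assms]] .
  show "D (level i) dvd i"
  proof (cases "level i")
    case (Suc k)
    have "\<not> \<not> D (Suc k) dvd i" using Suc unfolding level_def by (intro not_less_Least) simp
    thus ?thesis using Suc by simp
  qed simp
qed

lemma level_eq_iff:
  assumes "i \<ge> 1"
  shows "level i = l \<longleftrightarrow> D l dvd i \<and> \<not> D (Suc l) dvd i"
proof
  assume h: "D l dvd i \<and> \<not> D (Suc l) dvd i"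
  have "level i \<le> l" unfolding level_def using h by (intro Least_le) simp
  moreover have "\<not> level i < l"
    using h level_period_dvd[of "Suc (level i)" l] level_period_dvd_level(2)[OF assms]
    by (auto intro: dvd_trans)
  ultimately show "level i = l" by simp
qed (use level_period_dvd_level[OF assms] in simp)

lemma level_less: "i \<ge> 1 \<Longrightarrow> level i < i"
proof -
  assume i: "i \<ge> 1"
  have "D (level i) \<le> i" using level_period_dvd_level(1)[OF i] i by (intro dvd_imp_le) auto
  hence "2 ^ level i \<le> i" using level_period_ge_power[of "level i"] by linarith
  moreover have "level i < 2 ^ level i" by (rule less_exp)
  ultimately show ?thesis by linarith
qed

lemma card_level_eq:
  "card {i \<in> {1..J}. level i = l} = J div D l - J div D (Suc l)"
proof -
  have eq: "{i \<in> {1..J}. level i = l} = {i \<in> {1..J}. D l dvd i} - {i \<in> {1..J}. D (Suc l) dvd i}"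
    using level_eq_iff by auto
  have "{i \<in> {1..J}. D (Suc l) dvd i} \<subseteq> {i \<in> {1..J}. D l dvd i}"
    using level_period_dvd[of l "Suc l"] by (auto intro: dvd_trans)
  hence "card ({i \<in> {1..J}. D l dvd i} - {i \<in> {1..J}. D (Suc l) dvd i})
      = card {i \<in> {1..J}. D l dvd i} - card {i \<in> {1..J}. D (Suc l) dvd i}"
    by (intro card_Diff_subset) auto
  thus ?thesis unfolding eq card_multiples_atLeastAtMost[OF level_period_pos] .
qed

lemma card_level_ge:
  "real (card {i \<in> {1..J}. level i = l}) \<ge> real J / (2 * real (D l)) - 1"
proof -
  have "D (Suc l) \<ge> 2 * D l" using G_pos[of "Suc l"] by (simp add: level_period.simps)
  hence b: "real (D (Suc l)) \<ge> 2 * real (D l)" by (metis of_nat_le_iff of_nat_mult of_nat_numeral)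
  have le: "J div D (Suc l) \<le> J div D l"
    using level_period_dvd[of l "Suc l"] level_period_pos by (intro div_le_mono2) (auto intro: dvd_imp_le)
  have "real (J div D (Suc l)) \<le> real J / real (D (Suc l))" by (rule of_nat_div_le_of_nat)
  also have "\<dots> \<le> real J / (2 * real (D l))"
    using b level_period_pos[of l] by (intro divide_left_mono) auto
  finally have "real (J div D (Suc l)) \<le> real J / (2 * real (D l))" .
  moreover have "real (card {i \<in> {1..J}. level i = l}) = real (J div D l) - real (J div D (Suc l))"
    unfolding card_level_eq using le by (simp add: of_nat_diff)
  ultimately show ?thesis
    using real_div_minus_one_le_div[OF level_period_pos, of J l] by linarith
qed

definition cum_length :: "nat \<Rightarrow> nat" where
  "cum_length J = (\<Sum>i\<in>{1..J}. G (level i))"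

lemma cum_length_Suc: "cum_length (Suc J) = cum_length J + G (level (Suc J))"
  unfolding cum_length_def by simp

lemma cum_length_mono: "J \<le> J' \<Longrightarrow> cum_length J \<le> cum_length J'"
  unfolding cum_length_def by (intro sum_mono2) auto

lemma G_div_level_period_le: "real (G l) / real (D l) \<le> (if l = 0 then real (G 0) else (1/2) ^ l)"
proof (cases "l = 0")
  case False
  have "2 ^ l * real (G l) \<le> real (D l)"
    using power_mult_G_le_level_period[of l] False
    by (metis of_nat_le_iff of_nat_mult of_nat_numeral of_nat_power less_one not_le)
  thus ?thesis using False level_period_pos[of l] by (simp add: divide_simps power_one_over mult.commute)
qed simp

lemma card_level_le: "real (card {i \<in> {1..J}. level i = l}) \<le> real J / real (D l)"
proof -
  have "{i \<in> {1..J}. level i = l} \<subseteq> {i \<in> {1..J}. D l dvd i}"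
  proof
    fix i assume "i \<in> {i \<in> {1..J}. level i = l}"
    thus "i \<in> {i \<in> {1..J}. D l dvd i}" using level_period_dvd_level(1)[of i] by simp
  qed
  hence "card {i \<in> {1..J}. level i = l} \<le> card {i \<in> {1..J}. D l dvd i}"
    by (rule card_mono[rotated]) (rule finite_subset[OF _ finite_atLeastAtMost[of 1 J]], blast)
  hence "real (card {i \<in> {1..J}. level i = l}) \<le> real (J div D l)"
    by (simp only: card_multiples_atLeastAtMost[OF level_period_pos] of_nat_le_iff)
  also have "\<dots> \<le> real J / real (D l)" by (rule of_nat_div_le_of_nat)
  finally show ?thesis .
qed

lemma cum_length_le: "real (cum_length J) \<le> (real (G 0) + 2) * real J"
proof -
  have "cum_length J = (\<Sum>l\<in>level ` {1..J}. G l * card {i \<in> {1..J}. level i = l})"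
    unfolding cum_length_def by (subst sum.image_gen[of _ _ level]) (auto simp: mult.commute)
  hence "real (cum_length J) = (\<Sum>l\<in>level ` {1..J}. real (G l) * real (card {i \<in> {1..J}. level i = l}))"
    by simp
  also have "\<dots> \<le> (\<Sum>l\<in>level ` {1..J}. real (G l) * (real J / real (D l)))"
    by (rule sum_mono, rule mult_left_mono[OF card_level_le]) simp
  also have "\<dots> \<le> (\<Sum>l<J. real (G l) * (real J / real (D l)))"
  proof (rule sum_mono2)
    show "level ` {1..J} \<subseteq> {..<J}"
    proof
      fix l assume "l \<in> level ` {1..J}"
      then obtain i where "i \<in> {1..J}" "l = level i" by blast
      thus "l \<in> {..<J}" using level_less[of i] by simp
    qed
  qed auto
  also have "\<dots> = real J * (\<Sum>l<J. real (G l) / real (D l))"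
    by (simp add: sum_distrib_left mult.commute)
  also have "\<dots> \<le> real J * (\<Sum>l<J. (if l = 0 then real (G 0) else 0) + (1/2) ^ l)"
  proof (intro mult_left_mono sum_mono)
    fix l show "real (G l) / real (D l) \<le> (if l = 0 then real (G 0) else 0) + (1/2) ^ l"
      using G_div_level_period_le[of l] by (cases "l = 0") auto
  qed simp
  also have "\<dots> \<le> real J * (real (G 0) + 2)"
  proof (rule mult_left_mono)
    have "(\<Sum>l<J. (1/2::real) ^ l) \<le> (\<Sum>l. (1/2) ^ l)"
      by (intro sum_le_suminf summable_geometric) auto
    hence "(\<Sum>l<J. (1/2::real) ^ l) \<le> 2" using suminf_geometric[of "1/2::real"] by simp
    moreover have "(\<Sum>l<J. if l = 0 then real (G 0) else 0) \<le> real (G 0)" by (simp add: sum.delta')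
    ultimately show "(\<Sum>l<J. (if l = 0 then real (G 0) else 0) + (1/2::real) ^ l) \<le> real (G 0) + 2"
      by (simp only: sum.distrib)
  qed simp
  finally show ?thesis by (simp add: mult.commute)
qed

definition block_start :: "nat \<Rightarrow> nat" where
  "block_start j = cum_length (Suc j) + cum_length j"

definition block_level :: "nat \<Rightarrow> nat" where
  "block_level j = level (Suc j)"

lemma block_start_gap:
  "i < j \<Longrightarrow> block_start i + G (block_level i) + G (block_level j) \<le> block_start j"
  using cum_length_mono[of "Suc i" j]
  unfolding block_start_def block_level_def cum_length_Suc by simp

lemma G_block_level_le_block_start: "G (block_level j) \<le> block_start j"
  unfolding block_start_def block_level_def cum_length_Suc by simp

lemma strict_mono_block_start: "strict_mono block_start"
proof (rule strict_monoI)
  fix i j :: nat assume "i < j"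
  thus "block_start i < block_start j"
    using block_start_gap[of i j] G_pos[of "block_level i"] by linarith
qed

text \<open>
  \<open>i \<mapsto> i - 1\<close> maps the numbers \<open>i \<le> J\<close> of level \<open>l\<close> to blocks of level \<open>l\<close>
  starting before \<open>2 L i \<le> 2 (G 0 + 2) J\<close>.
\<close>
lemma card_level_le_card_block_level:
  assumes N: "2 * (G 0 + 2) * J \<le> N"
  shows "card {i \<in> {1..J}. level i = l} \<le> card {j. block_level j = l \<and> block_start j \<le> N}"
proof -
  define T where "T = {j. block_level j = l \<and> block_start j \<le> N}"
  have fin: "finite T"
    using strict_mono_imp_increasing[OF strict_mono_block_start]
    by (intro finite_subset[of T "{..N}"]) (auto simp: T_def intro: order_trans)
  have sub: "(\<lambda>i. i - 1) ` {i \<in> {1..J}. level i = l} \<subseteq> T"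
  proof safe
    fix i assume i: "i \<in> {1..J}" "l = level i"
    have "real (cum_length i) \<le> (real (G 0) + 2) * real i" by (rule cum_length_le)
    also have "\<dots> \<le> (real (G 0) + 2) * real J" using i by (intro mult_left_mono) auto
    finally have "real (cum_length i) \<le> real ((G 0 + 2) * J)" by (simp add: algebra_simps)
    hence "cum_length i \<le> (G 0 + 2) * J" by (simp only: of_nat_le_iff)
    moreover have "block_start (i - 1) \<le> 2 * cum_length i"
      using i cum_length_mono[of "i - 1" i] unfolding block_start_def by simp
    ultimately show "i - 1 \<in> T" using i N unfolding T_def block_level_def by auto
  qed
  have "inj_on (\<lambda>i. i - 1) {i \<in> {1..J}. level i = l}" unfolding inj_on_def by auto
  hence "card {i \<in> {1..J}. level i = l} = card ((\<lambda>i. i - 1) ` {i \<in> {1..J}. level i = l})"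
    by (rule card_image[symmetric])
  also have "\<dots> \<le> card T" by (rule card_mono[OF fin sub])
  finally show ?thesis unfolding T_def .
qed

lemma block_level_density:
  "\<exists>c>0. \<exists>N0. \<forall>N\<ge>N0. c * real N \<le> real (card {j. block_level j = l \<and> block_start j \<le> N})"
proof -
  define K where "K = G 0 + 2"
  define a where "a = D l"
  have Kpos: "K > 0" and apos: "a > 0" using level_period_pos unfolding K_def a_def by auto
  define c where "c = 1 / (8 * real K * real a)"
  have "c * real N \<le> real (card {j. block_level j = l \<and> block_start j \<le> N})"
    if N: "N \<ge> 16 * K * a" for N
  proof -
    define J where "J = N div (2 * K)"
    have "card {i \<in> {1..J}. level i = l} \<le> card {j. block_level j = l \<and> block_start j \<le> N}"
    proof (rule card_level_le_card_block_level)
      show "2 * (G 0 + 2) * J \<le> N" unfolding J_def K_def by (rule times_div_less_eq_dividend)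
    qed
    moreover have "real (card {i \<in> {1..J}. level i = l}) \<ge> real J / (2 * real a) - 1"
      using card_level_ge unfolding a_def by simp
    moreover have "real J / (2 * real a) \<ge> (real N / (2 * real K) - 1) / (2 * real a)"
      using real_div_minus_one_le_div[of "2 * K" N] Kpos apos unfolding J_def
      by (intro divide_right_mono) auto
    moreover have "(real N / (2 * real K) - 1) / (2 * real a) - 1 \<ge> c * real N"
    proof -
      have "real N \<ge> 16 * real K * real a" using N by (metis of_nat_le_iff of_nat_mult of_nat_numeral)
      hence "real N / (8 * real K * real a) \<ge> 2" using Kpos apos by (simp add: field_simps)
      moreover have "(real N / (2 * real K) - 1) / (2 * real a) - 1 - c * real N
            = real N / (8 * real K * real a) - 1 / (2 * real a) - 1"
        unfolding c_def using Kpos apos by (simp add: field_simps)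
      moreover have "1 / (2 * real a) \<le> 1" using apos by simp
      ultimately show ?thesis by linarith
    qed
    ultimately show ?thesis by (smt (verit) of_nat_le_iff)
  qed
  moreover have "c > 0" using Kpos apos unfolding c_def by simp
  ultimately show ?thesis by blast
qed

end



section \<open>Lower densities\<close>

lemma lower_density_pos_iff:
  "lower_density B > 0 \<longleftrightarrow> (\<exists>c>0. \<exists>N0. \<forall>N\<ge>N0. c * real N \<le> real (card (B \<inter> {1..N})))"
proof
  assume "lower_density B > 0"
  then obtain c where c: "0 < ereal c" "ereal c < lower_density B" using ereal_dense2 by blast
  hence "c > 0" by simp
  have "eventually (\<lambda>N. ereal c < ereal (real (card (B \<inter> {1..N})) / real N)) sequentially"
    using less_LiminfD[OF c(2)[unfolded lower_density_def]] .
  then obtain N0 where N0: "\<And>N. N \<ge> N0 \<Longrightarrow> c < real (card (B \<inter> {1..N})) / real N"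
    unfolding eventually_sequentially by auto
  have "\<forall>N\<ge>max N0 1. c * real N \<le> real (card (B \<inter> {1..N}))"
    using N0 by (simp add: less_divide_eq less_imp_le)
  thus "\<exists>c>0. \<exists>N0. \<forall>N\<ge>N0. c * real N \<le> real (card (B \<inter> {1..N}))"
    using \<open>c > 0\<close> by blast
next
  assume "\<exists>c>0. \<exists>N0. \<forall>N\<ge>N0. c * real N \<le> real (card (B \<inter> {1..N}))"
  then obtain c N0 where c: "c > 0" "\<And>N. N \<ge> N0 \<Longrightarrow> c * real N \<le> real (card (B \<inter> {1..N}))"
    by blast
  have "eventually (\<lambda>N. ereal c \<le> ereal (real (card (B \<inter> {1..N})) / real N)) sequentially"
    using c(2) by (intro eventually_sequentiallyI[of "max N0 1"]) (simp add: le_divide_eq)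
  hence "ereal c \<le> lower_density B" unfolding lower_density_def by (rule Liminf_bounded)
  moreover have "0 < ereal c" using c(1) by simp
  ultimately show "lower_density B > 0" by (rule less_le_trans[rotated])
qed

lemma measure_UN_intervals:
  fixes Q :: "nat set"
  assumes "finite Q" "0 \<le> \<delta>" "\<delta> < 1"
  shows "measure lborel (\<Union>n\<in>Q. {real n..real n + \<delta>}) = \<delta> * real (card Q)"
proof -
  have "{real m..real m + \<delta>} \<inter> {real n..real n + \<delta>} = {}" if "m < n" for m n
  proof -
    have "real (Suc m) \<le> real n" using that by (simp only: of_nat_le_iff Suc_le_eq)
    thus ?thesis using assms(3) by auto
  qed
  hence "disjoint_family_on (\<lambda>n. {real n..real n + \<delta>}) Q"
    unfolding disjoint_family_on_def by (metis inf_commute nat_neq_iff)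
  hence "measure lborel (\<Union>n\<in>Q. {real n..real n + \<delta>}) = (\<Sum>n\<in>Q. measure lborel {real n..real n + \<delta>})"
    by (intro measure_finite_Union[OF assms(1)]) (auto simp: emeasure_lborel_Icc_eq)
  also have "\<dots> = \<delta> * real (card Q)" unfolding measure_def using assms(2) by simp
  finally show ?thesis .
qed

lemma Liminf_measure_pos_of_lower_density:
  fixes A :: "real set" and B :: "nat set"
  assumes A: "A \<in> sets lborel" and B: "lower_density B > 0" and \<delta>: "0 < \<delta>" "\<delta> \<le> 1/2"
    and intervals: "\<And>n s. n \<in> B \<Longrightarrow> 0 \<le> s \<Longrightarrow> s \<le> \<delta> \<Longrightarrow> real n + s \<in> A"
  shows "Liminf at_top (\<lambda>N. ereal (measure lborel (A \<inter> {0..N}) / N)) > 0"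
proof -
  obtain c N0 where c: "c > 0" "\<And>N. N \<ge> N0 \<Longrightarrow> c * real N \<le> real (card (B \<inter> {1..N}))"
    using B lower_density_pos_iff by blast
  have "c * \<delta> / 2 \<le> measure lborel (A \<inter> {0..N}) / N" if N: "N \<ge> real N0 + 4" for N :: real
  proof -
    define K where "K = nat \<lfloor>N - 1\<rfloor>"
    have "real K = of_int \<lfloor>N - 1\<rfloor>" unfolding K_def using N by simp
    hence K: "N - 2 \<le> real K" "real K + 1 \<le> N"
      using of_int_floor_le[of "N - 1"] real_of_int_floor_add_one_gt[of "N - 1"] by linarith+
    have "(\<Union>n\<in>B \<inter> {1..K}. {real n..real n + \<delta>}) \<subseteq> A \<inter> {0..N}"
    proof safe
      fix n t assume n: "n \<in> B" "n \<in> {1..K}" and t: "t \<in> {real n..real n + \<delta>}"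
      have "real n \<le> real K" using n(2) by simp
      thus "t \<in> {0..N}" using t K \<delta> by auto
      show "t \<in> A" using intervals[OF n(1), of "t - real n"] t by simp
    qed
    moreover have "A \<inter> {0..N} \<in> fmeasurable lborel"
      using A fmeasurableI2[OF fmeasurable_cbox[of 0 N], of "A \<inter> {0..N}"] by auto
    ultimately have "measure lborel (\<Union>n\<in>B \<inter> {1..K}. {real n..real n + \<delta>}) \<le> measure lborel (A \<inter> {0..N})"
      by (intro measure_mono_fmeasurable) auto
    hence "\<delta> * real (card (B \<inter> {1..K})) \<le> measure lborel (A \<inter> {0..N})"
      using \<delta> by (simp add: measure_UN_intervals)
    moreover have "c * real K \<le> real (card (B \<inter> {1..K}))" using c(2) K N by simp
    moreover have "N / 2 \<le> real K" using K N by linarith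
    ultimately have "\<delta> * (c * (N / 2)) \<le> measure lborel (A \<inter> {0..N})"
      using c(1) \<delta> by (smt (verit) mult_left_mono mult_le_cancel_left_pos)
    thus ?thesis using N by (simp add: field_simps)
  qed
  hence "eventually (\<lambda>N. ereal (c * \<delta> / 2) \<le> ereal (measure lborel (A \<inter> {0..N}) / N)) at_top"
    by (intro eventually_at_top_linorderI[of "real N0 + 4"]) simp
  hence "ereal (c * \<delta> / 2) \<le> Liminf at_top (\<lambda>N. ereal (measure lborel (A \<inter> {0..N}) / N))"
    by (rule Liminf_bounded)
  moreover have "0 < ereal (c * \<delta> / 2)" using c(1) \<delta> by simp
  ultimately show ?thesis by (rule less_le_trans[rotated])
qed

section \<open>Dense sequences and uniform boundedness\<close>

lemma dense_sequence_infinitely_often: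
  fixes Y :: "'a::second_countable_topology set"
  assumes "closure Y = UNIV"
  obtains y :: "nat \<Rightarrow> 'a" where "range y \<subseteq> Y" "\<And>U. open U \<Longrightarrow> U \<noteq> {} \<Longrightarrow> infinite {k. y k \<in> U}"
proof -
  obtain B :: "'a set set" where B: "countable B" "topological_basis B"
    using ex_countable_basis by blast
  have meets: "U \<inter> Y \<noteq> {}" if "open U" "U \<noteq> {}" for U
    using open_Int_closure_eq_empty[OF that(1), of Y] that assms by auto
  obtain b0 where "b0 \<in> B" using topological_basisE[OF B(2) open_UNIV UNIV_I] by blast
  hence "B \<noteq> {}" by blast
  define d where "d i = (SOME z. z \<in> Y \<and> (from_nat_into B i \<noteq> {} \<longrightarrow> z \<in> from_nat_into B i))" for i
  have d: "d i \<in> Y \<and> (from_nat_into B i \<noteq> {} \<longrightarrow> d i \<in> from_nat_into B i)" for i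
  proof -
    have "\<exists>z. z \<in> Y \<and> (from_nat_into B i \<noteq> {} \<longrightarrow> z \<in> from_nat_into B i)"
    proof (cases "from_nat_into B i = {}")
      case True
      thus ?thesis using meets[of UNIV] by auto
    next
      case False
      have "open (from_nat_into B i)"
        using topological_basis_open[OF B(2) from_nat_into[OF \<open>B \<noteq> {}\<close>]] .
      then obtain z where "z \<in> from_nat_into B i" "z \<in> Y" using meets[OF _ False] by auto
      thus ?thesis by auto
    qed
    thus ?thesis unfolding d_def by (rule someI_ex)
  qed
  define y where "y k = d (fst (prod_decode k))" for k
  have "infinite {k. y k \<in> U}" if U: "open U" "U \<noteq> {}" for U
  proof -
    obtain z where "z \<in> U" using U by blast
    then obtain b where b: "b \<in> B" "z \<in> b" "b \<subseteq> U" using topological_basisE[OF B(2) U(1)] by blast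
    have "d (to_nat_on B b) \<in> U" using d[of "to_nat_on B b"] b B(1) by auto
    hence "y (prod_encode (to_nat_on B b, t)) \<in> U" for t unfolding y_def by simp
    thus ?thesis
      unfolding infinite_nat_iff_unbounded_le using le_prod_encode_2 by blast
  qed
  moreover have "range y \<subseteq> Y" unfolding y_def using d by auto
  ultimately show thesis using that by blast
qed

lemma bounded_linear_norm_le_of_ball_bound:
  assumes L: "bounded_linear L" and \<rho>: "\<rho> > 0"
    and bound: "\<And>w. w \<in> ball z0 \<rho> \<Longrightarrow> norm (L w) \<le> k"
  shows "norm (L z) \<le> 4 * k / \<rho> * norm z"
proof (cases "z = 0")
  case False
  interpret bounded_linear L by (rule L)
  define w where "w = (\<rho> / (2 * norm z)) *\<^sub>R z"
  have "norm w = \<rho> / 2" unfolding w_def using False \<rho> by simp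
  hence "z0 + w \<in> ball z0 \<rho>" "z0 \<in> ball z0 \<rho>" using \<rho> by (auto simp: dist_norm)
  hence "norm (L (z0 + w)) \<le> k" "norm (L z0) \<le> k" using bound by auto
  hence "norm (L (z0 + w) - L z0) \<le> 2 * k"
    using norm_triangle_ineq4[of "L (z0 + w)" "L z0"] by linarith
  hence Lw: "norm (L w) \<le> 2 * k" by (simp add: add)
  have "L z = (2 * norm z / \<rho>) *\<^sub>R L w"
    unfolding w_def using False \<rho> by (simp add: scaleR)
  hence "norm (L z) = (2 * norm z / \<rho>) * norm (L w)" using \<rho> by simp
  also have "\<dots> \<le> (2 * norm z / \<rho>) * (2 * k)"
    using Lw \<rho> by (intro mult_left_mono) auto
  also have "\<dots> = 4 * k / \<rho> * norm z" by (simp add: field_simps)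
  finally show ?thesis .
qed (simp add: linear_0[OF bounded_linear.linear[OF L]])

lemma Baire_closed_cover_ball:
  fixes F :: "nat \<Rightarrow> 'a::complete_space set"
  assumes closed: "\<And>k. closed (F k)" and cover: "(\<Union>k. F k) = UNIV"
  obtains k z0 \<rho> where "\<rho> > 0" "ball z0 \<rho> \<subseteq> F k"
proof -
  have "\<exists>k. euclidean interior_of (F k) \<noteq> {}"
  proof (rule ccontr)
    assume empty: "\<nexists>k. euclidean interior_of (F k) \<noteq> {}"
    have "euclidean interior_of \<Union>(range F) = {}"
    proof (rule Baire_category_alt)
      show "completely_metrizable_space (euclidean :: 'a topology) \<or>
          locally_compact_space (euclidean :: 'a topology) \<and> regular_space (euclidean :: 'a topology)"
        using completely_metrizable_space_euclidean by blast
      fix S assume "S \<in> range F"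
      then obtain k where k: "S = F k" by blast
      show "closedin euclidean S \<and> euclidean interior_of S = {}"
        using closed_closedin[THEN iffD1, OF closed[of k]] empty unfolding k by blast
    qed simp
    thus False using cover by simp
  qed
  then obtain k where "euclidean interior_of (F k) \<noteq> {}" by (rule exE)
  then obtain z0 where "z0 \<in> euclidean interior_of (F k)" by (meson equals0I)
  hence "\<exists>Op. openin euclidean Op \<and> z0 \<in> Op \<and> Op \<subseteq> F k"
    unfolding interior_of_def by (rule CollectD)
  then obtain Op where Op: "openin euclidean Op" "z0 \<in> Op" "Op \<subseteq> F k" by (elim exE conjE)
  have "open Op" using Op(1) by (rule open_openin[THEN iffD2])
  then obtain \<rho> where "\<rho> > 0" "ball z0 \<rho> \<subseteq> Op" using Op(2) by (rule openE)
  thus thesis using that Op(3) by blast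
qed

lemma uniform_boundedness:
  fixes W :: "'i \<Rightarrow> 'a::banach \<Rightarrow> 'b::real_normed_vector"
  assumes lin: "\<And>s. s \<in> K \<Longrightarrow> bounded_linear (W s)"
    and pointwise: "\<And>z. \<exists>B. \<forall>s\<in>K. norm (W s z) \<le> B"
  shows "\<exists>B>0. \<forall>s\<in>K. \<forall>z. norm (W s z) \<le> B * norm z"
proof -
  define F where "F k = {z. \<forall>s\<in>K. norm (W s z) \<le> real k}" for k :: nat
  have "closed (F k)" for k
  proof -
    have "closed {z. norm (W s z) \<le> real k}" if "s \<in> K" for s
    proof (rule closed_Collect_le)
      show "continuous_on UNIV (\<lambda>z. norm (W s z))"
        using lin[OF that] by (intro continuous_on_norm linear_continuous_on)
    qed simp
    moreover have "F k = (\<Inter>s\<in>K. {z. norm (W s z) \<le> real k})" unfolding F_def by auto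
    ultimately show ?thesis by auto
  qed
  moreover have "z \<in> (\<Union>k. F k)" for z
  proof -
    obtain B where "\<forall>s\<in>K. norm (W s z) \<le> B" using pointwise by blast
    moreover obtain k :: nat where "B \<le> real k" using real_arch_simple by blast
    ultimately have "z \<in> F k" unfolding F_def by (auto intro: order_trans)
    thus ?thesis by blast
  qed
  hence "(\<Union>k. F k) = UNIV" by blast
  ultimately obtain k z0 \<rho> where \<rho>: "\<rho> > 0" "ball z0 \<rho> \<subseteq> F k"
    by (rule Baire_closed_cover_ball)
  have "norm (W s z) \<le> (4 * real k / \<rho> + 1) * norm z" if "s \<in> K" for s z
  proof -
    have "norm (W s z) \<le> 4 * real k / \<rho> * norm z"
      using \<rho> that unfolding F_def
      by (intro bounded_linear_norm_le_of_ball_bound[OF lin[OF that] \<rho>(1)]) auto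
    thus ?thesis by (simp add: distrib_right add_increasing2)
  qed
  moreover have "4 * real k / \<rho> + 1 > 0" using \<rho> by (simp add: add_nonneg_pos)
  ultimately show ?thesis by blast
qed

section \<open>\<open>C\<close>-regularized semigroups\<close>

locale regularized_semigroup =
  fixes C :: "'a::banach \<Rightarrow> 'a" and W :: "real \<Rightarrow> 'a \<Rightarrow> 'a"
  assumes C_reg_semigroup: "C_reg_semigroup C W"
begin

abbreviation T where "T \<equiv> expA C W 1"
abbreviation dom_T where "dom_T \<equiv> expA_dom C W 1"

lemma bounded_linear_C: "bounded_linear C"
  and inj_C: "inj C"
  and bounded_linear_W: "t \<ge> 0 \<Longrightarrow> bounded_linear (W t)"
  and continuous_W: "continuous_on {0..} (\<lambda>t. W t x)"
  and W_0: "W 0 = C"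
  and W_W: "s \<ge> 0 \<Longrightarrow> t \<ge> 0 \<Longrightarrow> W t (W s x) = C (W (t + s) x)"
  using C_reg_semigroup unfolding C_reg_semigroup_def by auto

lemma W_C: "t \<ge> 0 \<Longrightarrow> W t (C x) = C (W t x)"
  using W_W[of 0 t x] W_0 by simp

lemma expA_eqI: "W t x = C z \<Longrightarrow> expA C W t x = z"
  unfolding expA_def using inj_C by (simp add: inv_f_f)

lemma C_expA: "x \<in> expA_dom C W t \<Longrightarrow> C (expA C W t x) = W t x"
  unfolding expA_def expA_dom_def by (auto simp: f_inv_into_f)

lemma expA_C: "t \<ge> 0 \<Longrightarrow> expA C W t (C x) = W t x"
  by (intro expA_eqI W_C)

lemma C_in_solution_space: "C x \<in> solution_space C W"
proof -
  have "continuous_on {0..} (\<lambda>t. expA C W t (C x))"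
    using continuous_W by (rule continuous_on_eq) (simp add: expA_C)
  thus ?thesis unfolding solution_space_def using W_C by auto
qed

lemma T_expA:
  assumes "y \<in> solution_space C W" "t \<ge> 0"
  shows "expA C W t y \<in> dom_T" "T (expA C W t y) = expA C W (t + 1) y"
proof -
  have dom: "y \<in> expA_dom C W t" "y \<in> expA_dom C W (t + 1)"
    using assms unfolding solution_space_def expA_dom_def by auto
  have "C (W 1 (expA C W t y)) = W 1 (W t y)"
    using W_C[of 1 "expA C W t y"] C_expA[OF dom(1)] by simp
  also have "\<dots> = C (W (t + 1) y)" using W_W[of t 1 y] assms(2) by (simp add: add.commute)
  finally have W1: "W 1 (expA C W t y) = W (t + 1) y" using inj_C by (simp add: inj_eq)
  thus "expA C W t y \<in> dom_T" using dom(2) unfolding expA_dom_def by simp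
  show "T (expA C W t y) = expA C W (t + 1) y" unfolding expA_def[of C W 1] W1
    by (simp add: expA_def)
qed

lemma funpow_T_solution_space:
  assumes "y \<in> solution_space C W"
  shows "(T ^^ n) y = expA C W (real n) y \<and> (T ^^ n) y \<in> dom_T"
proof (induction n)
  case 0
  have "expA C W 0 y = y" using W_0 by (intro expA_eqI) simp
  thus ?case using T_expA(1)[OF assms, of 0] by simp
next
  case (Suc n)
  thus ?case using T_expA[OF assms, of "real n"] T_expA(1)[OF assms, of "real (Suc n)"]
    by (simp add: add.commute)
qed

lemma T_sums:
  assumes "u sums U" "\<And>n. u n \<in> dom_T" "(\<lambda>n. T (u n)) sums V"
  shows "U \<in> dom_T" "T U = V"
proof -
  have "(\<lambda>n. W 1 (u n)) sums W 1 U"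
    using bounded_linear.sums[OF bounded_linear_W assms(1)] by simp
  moreover have "(\<lambda>n. W 1 (u n)) sums C V"
    using bounded_linear.sums[OF bounded_linear_C assms(3)] C_expA[OF assms(2)] by simp
  ultimately have "W 1 U = C V" by (rule sums_unique2)
  thus "U \<in> dom_T" "T U = V" unfolding expA_dom_def by (auto intro: expA_eqI)
qed

lemma expA_C_funpow_T:
  assumes dom: "\<And>k. (T ^^ k) x \<in> dom_T" and "s \<ge> 0"
  shows "expA C W (real n + s) (C x) = W s ((T ^^ n) x)"
proof -
  have orbit: "C ((T ^^ n) x) = W (real n) x" for n
  proof (induction n)
    case (Suc n)
    have "C ((T ^^ Suc n) x) = W 1 ((T ^^ n) x)" using C_expA[OF dom[of n]] by simp
    moreover have "C (W 1 ((T ^^ n) x)) = C (W (real (Suc n)) x)"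
      using W_C[of 1 "(T ^^ n) x", symmetric] Suc W_W[of "real n" 1 x] by (simp add: add.commute)
    ultimately show ?case using inj_C by (simp add: inj_eq)
  qed (simp add: W_0)
  have "C (W s ((T ^^ n) x)) = C (W (real n + s) x)"
    using W_C[OF assms(2), of "(T ^^ n) x", symmetric] orbit[of n] W_W[of "real n" s x] assms(2)
    by (simp add: add.commute)
  hence "W s ((T ^^ n) x) = W (real n + s) x" using inj_C by (simp add: inj_eq)
  thus ?thesis using expA_C[of "real n + s" x] assms(2) by simp
qed

lemma W_uniformly_bounded_01: "\<exists>B>0. \<forall>s\<in>{0..1}. \<forall>z. norm (W s z) \<le> B * norm z"
proof (rule uniform_boundedness)
  fix z
  have "compact ((\<lambda>s. W s z) ` {0..1})"
    by (intro compact_continuous_image continuous_on_subset[OF continuous_W]) auto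
  hence "bounded ((\<lambda>s. W s z) ` {0..1})" by (rule compact_imp_bounded)
  then obtain B where "\<forall>y\<in>(\<lambda>s. W s z) ` {0..1}. norm y \<le> B"
    unfolding bounded_iff by blast
  thus "\<exists>B. \<forall>s\<in>{0..1}. norm (W s z) \<le> B" by blast
qed (simp add: bounded_linear_W)

text \<open>Strong continuity at \<open>0\<close> and local boundedness keep \<open>W s z\<close> near \<open>C v\<close>.\<close>
lemma W_small_time_in_open:
  assumes U: "open U" "C v \<in> U"
  obtains V \<delta> where "open V" "V \<noteq> {}" "0 < \<delta>" "\<delta> \<le> 1/2"
    "\<And>z s. z \<in> V \<Longrightarrow> 0 \<le> s \<Longrightarrow> s \<le> \<delta> \<Longrightarrow> W s z \<in> U"
proof -
  obtain r where r: "r > 0" "ball (C v) r \<subseteq> U" using U by (rule openE)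
  obtain B where B: "B > 0" "\<And>s z. s \<in> {0..1} \<Longrightarrow> norm (W s z) \<le> B * norm z"
    using W_uniformly_bounded_01 by blast
  have "\<forall>e>0. \<exists>d>0. \<forall>s\<in>{0..}. dist s 0 < d \<longrightarrow> dist (W s v) (W 0 v) < e"
    using continuous_W[of v] unfolding continuous_on_iff by (rule bspec) simp
  moreover have "r / 2 > 0" using r(1) by simp
  ultimately obtain \<delta>' where \<delta>': "\<delta>' > 0" "\<And>s. s \<in> {0..} \<Longrightarrow> dist s 0 < \<delta>' \<Longrightarrow> dist (W s v) (C v) < r / 2"
    using W_0 by blast
  define \<delta> where "\<delta> = min (\<delta>' / 2) (1 / 2)"
  have \<delta>: "0 < \<delta>" "\<delta> \<le> 1/2" "\<delta> < \<delta>'" unfolding \<delta>_def using \<delta>' by auto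
  have "W s z \<in> U" if z: "z \<in> ball v (r / (2 * B))" and s: "0 \<le> s" "s \<le> \<delta>" for z s
  proof -
    have "dist (W s z) (W s v) = norm (W s (z - v))"
      using bounded_linear_W[OF s(1)] by (simp add: dist_norm linear_diff bounded_linear.linear)
    also have "\<dots> \<le> B * norm (z - v)" using B(2) s \<delta> by simp
    also have "\<dots> < B * (r / (2 * B))"
      using z B(1) by (intro mult_strict_left_mono) (auto simp: dist_norm norm_minus_commute)
    finally have "dist (W s z) (W s v) < r / 2" using B(1) by simp
    moreover have "dist (W s v) (C v) < r / 2" using \<delta>'(2)[of s] s \<delta> by simp
    ultimately have "dist (C v) (W s z) < r" using dist_triangle[of "W s z" "C v" "W s v"]
      by (simp add: dist_commute)
    thus ?thesis using r(2) by auto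
  qed
  moreover have "r / (2 * B) > 0" using r(1) B(1) by simp
  hence "ball v (r / (2 * B)) \<noteq> {}" by simp
  ultimately show thesis using that[of "ball v (r / (2 * B))" \<delta>] \<delta> by blast
qed

lemma freq_hypercyclic_sg_of_T:
  assumes C_dense: "closure (range C) = UNIV"
    and dom: "\<And>k. (T ^^ k) x \<in> dom_T"
    and freq: "\<And>U. open U \<Longrightarrow> U \<noteq> {} \<Longrightarrow> lower_density {n. (T ^^ n) x \<in> U} > 0"
  shows "freq_hypercyclic_sg C W"
  unfolding freq_hypercyclic_sg_def
proof (intro bexI[OF _ C_in_solution_space] allI impI, elim conjE)
  fix U :: "'a set" assume U: "open U" "U \<noteq> {}"
  define A where "A = {t. t \<ge> 0 \<and> expA C W t (C x) \<in> U}"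
  obtain v where "C v \<in> U"
    using open_Int_closure_eq_empty[OF U(1), of "range C"] U(2) C_dense by auto
  obtain V \<delta> where V: "open V" "V \<noteq> {}" and \<delta>: "0 < \<delta>" "\<delta> \<le> 1/2"
    and small: "\<And>z s. z \<in> V \<Longrightarrow> 0 \<le> s \<Longrightarrow> s \<le> \<delta> \<Longrightarrow> W s z \<in> U"
    by (fact W_small_time_in_open[OF U(1) \<open>C v \<in> U\<close>])
  obtain G where G: "open G" "G \<inter> {0..} = (\<lambda>t. W t x) -` U \<inter> {0..}"
    using continuous_W[of x] U(1) unfolding continuous_on_open_invariant by blast
  have "A = G \<inter> {0..}" unfolding A_def using G(2) expA_C by auto
  hence "A \<in> sets lborel" using G(1) by simp
  moreover have "real n + s \<in> A" if "n \<in> {n. (T ^^ n) x \<in> V}" "0 \<le> s" "s \<le> \<delta>" for n s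
    using that small expA_C_funpow_T[OF dom] unfolding A_def by auto
  ultimately have "Liminf at_top (\<lambda>N. ereal (measure lborel (A \<inter> {0..N}) / N)) > 0"
    by (rule Liminf_measure_pos_of_lower_density[OF _ freq[OF V] \<delta>])
  thus "Liminf at_top (\<lambda>N. ereal (measure lborel ({t. t \<ge> 0 \<and> expA C W t (C x) \<in> U} \<inter> {0..N}) / N)) > 0"
    unfolding A_def .
qed

end


section \<open>The frequently hypercyclic vector\<close>

lemma quarter_power_max_le: "(1/4::real) ^ max l q \<le> (1/2) ^ l * (1/2) ^ q"
proof -
  have "(1/4::real) ^ max l q = (1/2) ^ (2 * max l q)"
    by (simp add: power_mult power2_eq_square)
  also have "\<dots> \<le> (1/2) ^ (l + q)" by (rule power_decreasing) auto
  finally show ?thesis by (simp add: power_add)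
qed

locale freq_hypercyclicity_criterion = regularized_semigroup C W
  for C :: "'a::{banach, second_countable_topology} \<Rightarrow> 'a" and W +
  fixes Y0 :: "'a set" and S :: "'a \<Rightarrow> 'a"
  assumes Y0_sub: "Y0 \<subseteq> solution_space C W"
    and S_maps: "\<forall>y\<in>Y0. S y \<in> Y0"
    and T_S: "\<forall>y\<in>Y0. S y \<in> expA_dom C W 1 \<and> expA C W 1 (S y) = y"
    and uncond_S: "\<forall>y\<in>Y0. uncond_conv (\<lambda>n. (S ^^ n) y)"
    and uncond_T: "\<forall>y\<in>Y0. uncond_conv (\<lambda>n. expA C W (real n) y)"
begin

lemma funpow_S_in_Y0: "y \<in> Y0 \<Longrightarrow> (S ^^ n) y \<in> Y0"
  by (induction n) (use S_maps in auto)

lemma funpow_T_Y0: "y \<in> Y0 \<Longrightarrow> (T ^^ n) y = expA C W (real n) y \<and> (T ^^ n) y \<in> dom_T"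
  using funpow_T_solution_space Y0_sub by blast

lemma funpow_T_funpow_S:
  assumes "y \<in> Y0"
  shows "(T ^^ k) ((S ^^ n) y) = (if k \<le> n then (S ^^ (n - k)) y else (T ^^ (k - n)) y)"
proof -
  have le: "(T ^^ k) ((S ^^ n) y) = (S ^^ (n - k)) y" if "k \<le> n" for k
    using that
  proof (induction k)
    case (Suc k)
    hence "n - k = Suc (n - Suc k)" by simp
    thus ?case using Suc T_S funpow_S_in_Y0[OF assms, of "n - Suc k"] by simp
  qed simp
  have "(T ^^ k) ((S ^^ n) y) = (T ^^ (k - n)) ((T ^^ n) ((S ^^ n) y))" if "n \<le> k"
  proof -
    have "T ^^ k = (T ^^ (k - n)) \<circ> (T ^^ n)" using that by (simp flip: funpow_add)
    thus ?thesis by simp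
  qed
  thus ?thesis using le[of n] le by simp
qed

lemma funpow_T_funpow_S_in_dom:
  assumes "y \<in> Y0"
  shows "(T ^^ k) ((S ^^ n) y) \<in> dom_T"
proof (cases "k \<le> n")
  case True
  have "(T ^^ 0) ((S ^^ (n - k)) y) \<in> dom_T" using funpow_T_Y0 funpow_S_in_Y0[OF assms] by blast
  thus ?thesis using True by (simp add: funpow_T_funpow_S[OF assms])
next
  case False
  have "(T ^^ (k - n)) y \<in> dom_T" using funpow_T_Y0[OF assms] by blast
  thus ?thesis by (simp only: funpow_T_funpow_S[OF assms] if_not_P[OF False])
qed

definition tail_small :: "'a \<Rightarrow> nat \<Rightarrow> real \<Rightarrow> bool" where
  "tail_small y M \<epsilon> \<longleftrightarrow> (\<forall>F. finite F \<and> F \<subseteq> {M..} \<longrightarrow>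
      norm (\<Sum>i\<in>F. (S ^^ i) y) < \<epsilon> \<and> norm (\<Sum>i\<in>F. (T ^^ i) y) < \<epsilon>)"

lemma tail_small_mono: "tail_small y M \<epsilon> \<Longrightarrow> M \<le> M' \<Longrightarrow> tail_small y M' \<epsilon>"
  unfolding tail_small_def by (meson atLeast_subset_iff order_trans)

lemma tail_small_exists:
  assumes "y \<in> Y0" "\<epsilon> > 0"
  shows "\<exists>M. tail_small y M \<epsilon>"
proof -
  obtain N1 where N1: "\<And>F. finite F \<and> F \<subseteq> {1..} \<and> F \<inter> {1..N1} = {} \<Longrightarrow> norm (\<Sum>i\<in>F. (S ^^ i) y) < \<epsilon>"
    using uncond_S assms unfolding uncond_conv_def by blast
  obtain N2 where N2: "\<And>F. finite F \<and> F \<subseteq> {1..} \<and> F \<inter> {1..N2} = {} \<Longrightarrow> norm (\<Sum>i\<in>F. expA C W (real i) y) < \<epsilon>"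
    using uncond_T assms unfolding uncond_conv_def by blast
  have "tail_small y (N1 + N2 + 1) \<epsilon>"
    unfolding tail_small_def
  proof (intro allI impI conjI)
    fix F :: "nat set" assume F: "finite F \<and> F \<subseteq> {N1 + N2 + 1..}"
    hence F': "F \<subseteq> {1..}" "F \<inter> {1..N1} = {}" "F \<inter> {1..N2} = {}" by auto
    show "norm (\<Sum>i\<in>F. (S ^^ i) y) < \<epsilon>" using N1 F F' by blast
    show "norm (\<Sum>i\<in>F. (T ^^ i) y) < \<epsilon>" using N2 F F' funpow_T_Y0[OF assms(1)] by simp
  qed
  thus ?thesis by blast
qed

lemma tail_small_reindex:
  assumes "tail_small y M \<epsilon>" "finite J" "inj_on g J" "\<And>j. j \<in> J \<Longrightarrow> M \<le> g j"
  shows "norm (\<Sum>j\<in>J. (S ^^ g j) y) < \<epsilon>" "norm (\<Sum>j\<in>J. (T ^^ g j) y) < \<epsilon>"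
proof -
  have "finite (g ` J) \<and> g ` J \<subseteq> {M..}" using assms(2,4) by auto
  hence "norm (\<Sum>i\<in>g ` J. (S ^^ i) y) < \<epsilon> \<and> norm (\<Sum>i\<in>g ` J. (T ^^ i) y) < \<epsilon>"
    using assms(1) unfolding tail_small_def by blast
  thus "norm (\<Sum>j\<in>J. (S ^^ g j) y) < \<epsilon>" "norm (\<Sum>j\<in>J. (T ^^ g j) y) < \<epsilon>"
    by (simp_all add: sum.reindex[OF assms(3)])
qed

lemma thresholds_exist:
  assumes "range y \<subseteq> Y0"
  obtains M :: "nat \<Rightarrow> nat"
  where "mono M" "\<And>l. l < M l" "\<And>i l. i \<le> l \<Longrightarrow> tail_small (y i) (M l) ((1/4) ^ l)"
proof -
  define m where "m i l = (SOME M. tail_small (y i) M ((1/4) ^ l))" for i l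
  have m: "tail_small (y i) (m i l) ((1/4) ^ l)" for i l
  proof -
    have "\<exists>M. tail_small (y i) M ((1/4) ^ l)" using assms by (intro tail_small_exists) auto
    thus ?thesis unfolding m_def by (rule someI_ex)
  qed
  define M where "M l = l + 1 + (\<Sum>i\<le>l. \<Sum>j\<le>l. m i j)" for l
  have "mono M"
  proof (rule monoI)
    fix l l' :: nat assume "l \<le> l'"
    have "(\<Sum>i\<le>l. \<Sum>j\<le>l. m i j) \<le> (\<Sum>i\<le>l. \<Sum>j\<le>l'. m i j)"
      by (intro sum_mono sum_mono2) (use \<open>l \<le> l'\<close> in auto)
    also have "\<dots> \<le> (\<Sum>i\<le>l'. \<Sum>j\<le>l'. m i j)" by (rule sum_mono2) (use \<open>l \<le> l'\<close> in auto)
    finally show "M l \<le> M l'" unfolding M_def using \<open>l \<le> l'\<close> by simp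
  qed
  moreover have "l < M l" for l unfolding M_def by simp
  moreover have "tail_small (y i) (M l) ((1/4) ^ l)" if "i \<le> l" for i l
  proof (rule tail_small_mono[OF m])
    have "m i l \<le> (\<Sum>j\<le>l. m i j)" by (rule member_le_sum) auto
    also have "\<dots> \<le> (\<Sum>i'\<le>l. \<Sum>j\<le>l. m i' j)"
      by (rule member_le_sum[where f = "\<lambda>i'. \<Sum>j\<le>l. m i' j"]) (use that in auto)
    finally show "m i l \<le> M l" unfolding M_def by simp
  qed
  ultimately show thesis by (rule that)
qed

end

text \<open>
  The vector is \<open>x = (\<Sum>j. S ^ p j (y (lev j)))\<close>, where \<open>p j\<close> and \<open>lev j\<close> are start and
  level of block \<open>j\<close> for \<open>G l = 2 M l\<close>. The \<open>j\<close>-th term of \<open>T ^ m x\<close> is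
  \<open>S ^ (p j - m) (y (lev j))\<close> or \<open>T ^ (m - p j) (y (lev j))\<close>; the gaps between blocks push
  all terms with \<open>p j \<noteq> m\<close> beyond the thresholds \<open>M\<close>, so \<open>T ^ p j x\<close> is within
  \<open>4 * 2 ^ - lev j\<close> of \<open>y (lev j)\<close>.
\<close>
locale freq_hypercyclicity_construction = freq_hypercyclicity_criterion C W Y0 S
  for C :: "'a::{banach, second_countable_topology} \<Rightarrow> 'a" and W Y0 S +
  fixes y :: "nat \<Rightarrow> 'a" and M :: "nat \<Rightarrow> nat"
  assumes y_in_Y0: "range y \<subseteq> Y0"
    and mono_M: "mono M"
    and less_M: "\<And>l. l < M l"
    and tail_small_M: "\<And>i l. i \<le> l \<Longrightarrow> tail_small (y i) (M l) ((1/4) ^ l)"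
    and y_often: "\<And>U. open U \<Longrightarrow> U \<noteq> {} \<Longrightarrow> infinite {k. y k \<in> U}"
begin

sublocale blocks: level_blocks "\<lambda>l. 2 * M l"
proof
  fix l show "1 \<le> 2 * M l" using less_M[of l] by linarith
qed

abbreviation p where "p \<equiv> blocks.block_start"
abbreviation lev where "lev \<equiv> blocks.block_level"

definition orbit_term :: "nat \<Rightarrow> nat \<Rightarrow> 'a" where
  "orbit_term m j = (T ^^ m) ((S ^^ p j) (y (lev j)))"

lemma orbit_term_eq:
  "orbit_term m j = (if m \<le> p j then (S ^^ (p j - m)) (y (lev j)) else (T ^^ (m - p j)) (y (lev j)))"
  unfolding orbit_term_def using y_in_Y0 by (intro funpow_T_funpow_S) auto

lemma orbit_term_in_dom: "orbit_term m j \<in> dom_T"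
  unfolding orbit_term_def using y_in_Y0 by (intro funpow_T_funpow_S_in_dom) auto

lemma T_orbit_term: "T (orbit_term m j) = orbit_term (Suc m) j"
  unfolding orbit_term_def by simp

lemma p_inj: "p i = p j \<Longrightarrow> i = j"
  using blocks.strict_mono_block_start by (simp add: strict_mono_eq)

lemma norm_sum_orbit_term_after:
  assumes J: "finite J" and lev: "\<And>j. j \<in> J \<Longrightarrow> lev j = l" and "l \<le> g"
    and after: "\<And>j. j \<in> J \<Longrightarrow> m + M g \<le> p j"
  shows "norm (\<Sum>j\<in>J. orbit_term m j) < (1/4) ^ g"
proof -
  have "m \<le> p j" if "j \<in> J" for j using after[OF that] by linarith
  hence "(\<Sum>j\<in>J. orbit_term m j) = (\<Sum>j\<in>J. (S ^^ (p j - m)) (y l))"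
    using lev by (intro sum.cong) (auto simp: orbit_term_eq)
  moreover have "inj_on (\<lambda>j. p j - m) J"
  proof (rule inj_onI)
    fix a b assume "a \<in> J" "b \<in> J" "p a - m = p b - m"
    hence "p a = p b" using after[of a] after[of b] by linarith
    thus "a = b" by (rule p_inj)
  qed
  moreover have "M g \<le> p j - m" if "j \<in> J" for j using after[OF that] by linarith
  ultimately show ?thesis
    using tail_small_reindex(1)[OF tail_small_M[OF \<open>l \<le> g\<close>] J] by simp
qed

lemma norm_sum_orbit_term_before:
  assumes J: "finite J" and lev: "\<And>j. j \<in> J \<Longrightarrow> lev j = l" and "l \<le> g"
    and before: "\<And>j. j \<in> J \<Longrightarrow> p j + M g \<le> m"
  shows "norm (\<Sum>j\<in>J. orbit_term m j) < (1/4) ^ g"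
proof -
  have "\<not> m \<le> p j" if "j \<in> J" for j using before[OF that] less_M[of g] by linarith
  hence "(\<Sum>j\<in>J. orbit_term m j) = (\<Sum>j\<in>J. (T ^^ (m - p j)) (y l))"
    using lev by (intro sum.cong) (auto simp: orbit_term_eq)
  moreover have "inj_on (\<lambda>j. m - p j) J"
  proof (rule inj_onI)
    fix a b assume "a \<in> J" "b \<in> J" "m - p a = m - p b"
    hence "p a = p b" using before[of a] before[of b] by linarith
    thus "a = b" by (rule p_inj)
  qed
  moreover have "M g \<le> m - p j" if "j \<in> J" for j using before[OF that] by linarith
  ultimately show ?thesis
    using tail_small_reindex(2)[OF tail_small_M[OF \<open>l \<le> g\<close>] J] by simp
qed

lemma norm_sum_orbit_term_one_level:
  assumes J: "finite J" and lev: "\<And>j. j \<in> J \<Longrightarrow> lev j = l"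
    and gap: "\<And>j. j \<in> J \<Longrightarrow> M (max l q) \<le> p j - m \<or> M (max l q) \<le> m - p j"
  shows "norm (\<Sum>j\<in>J. orbit_term m j) \<le> 2 * ((1/2) ^ l * (1/2) ^ q)"
proof -
  define g where "g = max l q"
  define Jp where "Jp = {j\<in>J. m < p j}"
  have "0 < M g" using less_M[of g] by simp
  have split: "m + M g \<le> p j \<or> p j + M g \<le> m" if "j \<in> J" for j
    using gap[OF that] unfolding g_def by linarith
  have after: "m + M g \<le> p j" if "j \<in> Jp" for j
    using split[of j] that unfolding Jp_def by auto
  have before: "p j + M g \<le> m" if "j \<in> J - Jp" for j
    using split[of j] that \<open>0 < M g\<close> unfolding Jp_def by auto
  have "finite Jp" "Jp \<subseteq> J" "l \<le> g" using J unfolding Jp_def g_def by auto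
  have "norm (\<Sum>j\<in>Jp. orbit_term m j) < (1/4) ^ g"
    by (rule norm_sum_orbit_term_after[OF \<open>finite Jp\<close> _ \<open>l \<le> g\<close> after])
      (use lev \<open>Jp \<subseteq> J\<close> in blast)+
  moreover have "norm (\<Sum>j\<in>J - Jp. orbit_term m j) < (1/4) ^ g"
    by (rule norm_sum_orbit_term_before[OF _ _ \<open>l \<le> g\<close> before]) (use J lev in auto)
  moreover have "(\<Sum>j\<in>J. orbit_term m j) = (\<Sum>j\<in>Jp. orbit_term m j) + (\<Sum>j\<in>J - Jp. orbit_term m j)"
    using J \<open>Jp \<subseteq> J\<close> by (simp add: sum.subset_diff)
  ultimately have "norm (\<Sum>j\<in>J. orbit_term m j) \<le> 2 * (1/4) ^ g"
    by (smt (verit) norm_triangle_ineq)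
  thus ?thesis using quarter_power_max_le[of l q] unfolding g_def by linarith
qed

lemma norm_sum_orbit_term_le:
  assumes J: "finite J"
    and gap: "\<And>j. j \<in> J \<Longrightarrow> M (max (lev j) q) \<le> p j - m \<or> M (max (lev j) q) \<le> m - p j"
  shows "norm (\<Sum>j\<in>J. orbit_term m j) \<le> 4 * (1/2) ^ q"
proof -
  have "norm (\<Sum>j\<in>J. orbit_term m j) = norm (\<Sum>l\<in>lev ` J. \<Sum>j\<in>{j\<in>J. lev j = l}. orbit_term m j)"
    by (subst sum.image_gen[OF J, of _ lev]) (rule refl)
  also have "\<dots> \<le> (\<Sum>l\<in>lev ` J. norm (\<Sum>j\<in>{j\<in>J. lev j = l}. orbit_term m j))"
    by (rule norm_sum)
  also have "\<dots> \<le> (\<Sum>l\<in>lev ` J. 2 * ((1/2) ^ l * (1/2) ^ q))"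
    using J gap by (intro sum_mono norm_sum_orbit_term_one_level) auto
  also have "\<dots> = 2 * (1/2) ^ q * (\<Sum>l\<in>lev ` J. (1/2) ^ l)"
    by (simp add: sum_distrib_left algebra_simps)
  also have "\<dots> \<le> 2 * (1/2) ^ q * 2"
  proof (rule mult_left_mono)
    have "(\<Sum>l\<in>lev ` J. (1/2::real) ^ l) \<le> (\<Sum>l. (1/2) ^ l)"
      using J by (intro sum_le_suminf summable_geometric) auto
    thus "(\<Sum>l\<in>lev ` J. (1/2::real) ^ l) \<le> 2" using suminf_geometric[of "1/2::real"] by simp
  qed simp
  finally show ?thesis by simp
qed

lemma summable_orbit_term: "summable (orbit_term m)"
  unfolding summable_Cauchy
proof (intro allI impI)
  fix e :: real assume "e > 0"
  obtain q0 where q0: "(1/2::real) ^ q0 < e / 4" using real_arch_pow_inv[of "e/4" "1/2"] \<open>e > 0\<close> by auto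
  define q where "q = max q0 m"
  have "(1/2::real) ^ q \<le> (1/2) ^ q0" unfolding q_def by (rule power_decreasing) auto
  hence qe: "4 * (1/2::real) ^ q < e" using q0 by linarith
  have bound: "norm (\<Sum>j\<in>{n..<k}. orbit_term m j) \<le> 4 * (1/2) ^ q" if "n \<ge> m + M q + 1" for n k
  proof (rule norm_sum_orbit_term_le)
    fix j assume "j \<in> {n..<k}"
    hence pj: "p j \<ge> m + M q + 1"
      using that strict_mono_imp_increasing[OF blocks.strict_mono_block_start, of j] by simp
    show "M (max (lev j) q) \<le> p j - m \<or> M (max (lev j) q) \<le> m - p j"
    proof (cases "lev j \<le> q")
      case False
      have "2 * M (lev j) \<le> p j" using blocks.G_block_level_le_block_start[of j] by simp
      moreover have "m < M (lev j)" using less_M[of "lev j"] False unfolding q_def by simp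
      ultimately show ?thesis using False by simp
    next
      case True
      hence "max (lev j) q = q" by simp
      thus ?thesis using pj by arith
    qed
  qed simp
  have "norm (sum (orbit_term m) {n..<k}) < e" if "n \<ge> m + M q + 1" for n k
    using bound[OF that, of k] qe by linarith
  thus "\<exists>N. \<forall>n\<ge>N. \<forall>k. norm (sum (orbit_term m) {n..<k}) < e" by blast
qed

definition x where "x = (\<Sum>j. orbit_term 0 j)"

lemma T_orbit_term_sums: "(\<lambda>j. T (orbit_term m j)) sums (\<Sum>j. orbit_term (Suc m) j)"
  using summable_orbit_term[of "Suc m"] by (simp add: T_orbit_term summable_sums)

lemma orbit_term_sums: "orbit_term m sums (T ^^ m) x"
proof (induction m)
  case 0
  show ?case using summable_orbit_term[of 0] unfolding x_def by (simp add: summable_sums)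
next
  case (Suc m)
  have "T ((T ^^ m) x) = (\<Sum>j. orbit_term (Suc m) j)"
    by (rule T_sums(2)[OF Suc orbit_term_in_dom T_orbit_term_sums])
  thus ?case using summable_orbit_term[of "Suc m"] by (simp add: summable_sums)
qed

lemma funpow_T_x_in_dom: "(T ^^ m) x \<in> dom_T"
  by (rule T_sums(1)[OF orbit_term_sums orbit_term_in_dom T_orbit_term_sums])

lemma funpow_T_x_near: "norm ((T ^^ p j0) x - y (lev j0)) \<le> 4 * (1/2) ^ lev j0"
proof -
  define m where "m = p j0"
  define k where "k = lev j0"
  define Z where "Z j = (if j \<noteq> j0 then orbit_term m j else 0)" for j
  have "orbit_term m j0 = y k" unfolding m_def k_def orbit_term_eq by simp
  hence "(\<lambda>j. orbit_term m j - (if j = j0 then y k else 0)) = Z"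
    unfolding Z_def by (intro ext) simp
  hence "Z sums ((T ^^ m) x - y k)"
    using sums_diff[OF orbit_term_sums[of m] sums_single[of j0 "\<lambda>_. y k"]] by simp
  hence lim: "(\<lambda>n. norm (\<Sum>j<n. Z j)) \<longlonglongrightarrow> norm ((T ^^ m) x - y k)"
    unfolding sums_def by (rule tendsto_norm)
  have bound: "norm (\<Sum>j<n. Z j) \<le> 4 * (1/2) ^ k" for n
  proof -
    have "(\<Sum>j<n. Z j) = (\<Sum>j\<in>{j\<in>{..<n}. j \<noteq> j0}. orbit_term m j)"
      unfolding Z_def by (rule sum.inter_filter[symmetric]) simp
    also have "norm \<dots> \<le> 4 * (1/2) ^ k"
    proof (rule norm_sum_orbit_term_le)
      fix j assume "j \<in> {j\<in>{..<n}. j \<noteq> j0}"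
      hence "j < j0 \<or> j0 < j" by auto
      moreover have "M (max (lev j) k) \<le> M (lev j) + M k"
        by (cases "lev j \<le> k") (auto simp: max_def)
      ultimately show "M (max (lev j) k) \<le> p j - m \<or> M (max (lev j) k) \<le> m - p j"
        using blocks.block_start_gap[of j j0] blocks.block_start_gap[of j0 j]
        unfolding m_def k_def by auto
    qed simp
    finally show ?thesis .
  qed
  have "norm ((T ^^ m) x - y k) \<le> 4 * (1/2) ^ k"
    by (rule LIMSEQ_le_const2[OF lim]) (use bound in blast)
  thus ?thesis unfolding m_def k_def .
qed

lemma lower_density_funpow_T_x:
  assumes U: "open U" "U \<noteq> {}"
  shows "lower_density {n. (T ^^ n) x \<in> U} > 0"
proof -
  obtain u where "u \<in> U" using U(2) by blast
  then obtain r where r: "r > 0" "ball u r \<subseteq> U" using U(1) by (elim openE)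
  obtain t where t: "(1/2::real) ^ t < r / 8" using real_arch_pow_inv[of "r/8" "1/2"] r by auto
  have "infinite {k. y k \<in> ball u (r/2)}" using r(1) by (intro y_often) auto
  then obtain k where k: "k \<ge> t" "y k \<in> ball u (r/2)" unfolding infinite_nat_iff_unbounded_le by blast
  have "(1/2::real) ^ k \<le> (1/2) ^ t" using k(1) by (intro power_decreasing) auto
  hence "4 * (1/2::real) ^ k < r / 2" using t by linarith
  hence near: "dist ((T ^^ p j) x) (y k) < r / 2" if "lev j = k" for j
    using funpow_T_x_near[of j] that by (simp add: dist_norm)
  hence hit: "(T ^^ p j) x \<in> U" if "lev j = k" for j
  proof -
    have "dist (y k) u < r / 2" using k(2) by (simp add: dist_commute)
    hence "dist ((T ^^ p j) x) u < r"
      using near[OF that] dist_triangle[of "(T ^^ p j) x" u "y k"]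
      by linarith
    thus ?thesis using r(2) by (auto simp: dist_commute)
  qed
  obtain c N0 where c: "c > 0" "\<forall>N\<ge>N0. c * real N \<le> real (card {j. lev j = k \<and> p j \<le> N})"
    using blocks.block_level_density[of k] by blast
  have "c * real N \<le> real (card ({n. (T ^^ n) x \<in> U} \<inter> {1..N}))" if "N \<ge> N0" for N
  proof -
    have "p ` {j. lev j = k \<and> p j \<le> N} \<subseteq> {n. (T ^^ n) x \<in> U} \<inter> {1..N}"
    proof
      fix n assume "n \<in> p ` {j. lev j = k \<and> p j \<le> N}"
      then obtain j where j: "lev j = k" "p j \<le> N" "n = p j" by blast
      have "2 * M (lev j) \<le> p j" using blocks.G_block_level_le_block_start[of j] by simp
      hence "1 \<le> p j" using less_M[of "lev j"] by linarith
      thus "n \<in> {n. (T ^^ n) x \<in> U} \<inter> {1..N}" using hit[OF j(1)] j(2,3) by simp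
    qed
    moreover have "inj_on p {j. lev j = k \<and> p j \<le> N}" by (auto simp: inj_on_def dest: p_inj)
    ultimately have "card {j. lev j = k \<and> p j \<le> N} \<le> card ({n. (T ^^ n) x \<in> U} \<inter> {1..N})"
      using card_mono[of "{n. (T ^^ n) x \<in> U} \<inter> {1..N}" "p ` {j. lev j = k \<and> p j \<le> N}"]
      by (simp add: card_image)
    hence "real (card {j. lev j = k \<and> p j \<le> N}) \<le> real (card ({n. (T ^^ n) x \<in> U} \<inter> {1..N}))"
      by (simp only: of_nat_le_iff)
    moreover have "c * real N \<le> real (card {j. lev j = k \<and> p j \<le> N})" using c(2) that by blast
    ultimately show ?thesis by linarith
  qed
  thus ?thesis unfolding lower_density_pos_iff using c(1) by blast
qed

end

lemma (in freq_hypercyclicity_criterion) freq_hypercyclic_orbit_exists: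
  assumes "closure Y0 = UNIV"
  obtains x where "\<And>k. (T ^^ k) x \<in> dom_T"
    "\<And>U. open U \<Longrightarrow> U \<noteq> {} \<Longrightarrow> lower_density {n. (T ^^ n) x \<in> U} > 0"
proof -
  obtain y :: "nat \<Rightarrow> 'a"
    where y: "range y \<subseteq> Y0" "\<And>U. open U \<Longrightarrow> U \<noteq> {} \<Longrightarrow> infinite {k. y k \<in> U}"
    by (rule dense_sequence_infinitely_often[OF assms]) (rule that)
  obtain M where M: "mono M" "\<And>l. l < M l" "\<And>i l. i \<le> l \<Longrightarrow> tail_small (y i) (M l) ((1/4) ^ l)"
    by (rule thresholds_exist[OF y(1)]) (rule that)
  interpret freq_hypercyclicity_construction C W Y0 S y M
    proof qed (fact y M)+
  show thesis by (rule that[OF funpow_T_x_in_dom lower_density_funpow_T_x])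
qed

theorem theorem3p6:
  fixes C :: "'a::{banach, second_countable_topology} \<Rightarrow> 'a"
    and W :: "real \<Rightarrow> 'a \<Rightarrow> 'a"
    and Y0 :: "'a set"
    and S :: "'a \<Rightarrow> 'a"
  assumes sg: "C_reg_semigroup C W"
    and Y0_sub: "Y0 \<subseteq> solution_space C W"
    and Y0_dense: "closure Y0 = UNIV"
    and S_maps: "\<forall>y\<in>Y0. S y \<in> Y0"
    and cond1: "\<forall>y\<in>Y0. S y \<in> expA_dom C W 1 \<and> expA C W 1 (S y) = y"
    and cond2: "\<forall>y\<in>Y0. uncond_conv (\<lambda>n. (S ^^ n) y)"
    and cond3: "\<forall>y\<in>Y0. uncond_conv (\<lambda>n. expA C W (real n) y)"
    and C_dense: "closure (range C) = UNIV"
  shows "freq_hypercyclic_op (expA_dom C W 1) (expA C W 1) \<and> freq_hypercyclic_sg C W"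
proof -
  interpret freq_hypercyclicity_criterion C W Y0 S
    using assms by unfold_locales
  obtain x where dom: "\<And>k. (T ^^ k) x \<in> dom_T"
    and freq: "\<And>U. open U \<Longrightarrow> U \<noteq> {} \<Longrightarrow> lower_density {n. (T ^^ n) x \<in> U} > 0"
    using freq_hypercyclic_orbit_exists[OF Y0_dense] by blast
  have "freq_hypercyclic_op dom_T T"
    unfolding freq_hypercyclic_op_def using dom[of 0] dom freq by auto
  moreover have "freq_hypercyclic_sg C W" by (rule freq_hypercyclic_sg_of_T[OF C_dense dom freq])
  ultimately show ?thesis ..
qed

end
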